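(* Let $s\ge 1$, $1\le M<N$ be integers and let $\tilde\phi:(0,\infty)\to\mathbb{R}$ be of class $C^4$, such that for some $r^*>0$ one has $\tilde\phi''(r)\ge 0$ for $r\in(0,r^*]$ and $\tilde\phi''(r)<0$ for $r>r^*$, and such that $\tilde\phi$ and its derivatives decay at infinity. Let $(y_\ell)_{\ell\in\mathbb{Z}}$ be an increasing chain with $y_{\ell+1+2N}-y_{\ell+2N}=y_{\ell+1}-y_\ell$ for all $\ell$, with atomistic energy $$\mathcal{E}^a(\mathbf{y})=\sum_{k=1}^{s}\sum_{\ell=-N+1}^{N}\tilde\phi(y_{\ell+k-1}-y_{\ell-1}).$$ Let $-N=\ell_{-M}<\ell_{-M+1}<\dots<\ell_M=N$ be integers, extended by $\ell_{j+2M}=\ell_j+2N$, set $Y_j=y_{\ell_j}$, $\tilde\nu_j=\ell_j-\ell_{j-1}$ and $\tilde r_j=(Y_j-Y_{j-1})/\tilde\nu_j$, and assume $\tilde\nu_j\ge s$ for all $j$ and that $\mathbf y$ is the piecewise linear interpolation of the $Y_j$, i.e. $y_{\ell_{j-1}+i}=Y_{j-1}+i\tilde r_j$ for $0\le i\le \tilde\nu_j$; write $\mathcal{E}^a(\mathbf{Y})$ for $\mathcal{E}^a(\mathbf y)$. Fix $\epsilon>0$ and define $\phi(r)=\epsilon^{-1}\tilde\phi(\epsilon r)$, $\phi_{cb}(r)=\sum_{k=1}^s\phi(kr)$, $X_j=\epsilon\ell_j$, $H_j=(X_j-X_{j-2})/2$, $\nu_j=\epsilon\tilde\nu_j$, $Y'_j=(Y_j-Y_{j-1})/(X_j-X_{j-1})$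 $(=\tilde r_j/\epsilon)$, $Y''_j=(Y'_j-Y'_{j-1})/H_j$, and the local QC energy $\mathcal{E}^{qc}(\mathbf{Y})=\sum_{j=-M+1}^{M}\nu_j\phi_{cb}(Y'_j)$. Then there exist scalars $\eta_{jk}\in[0,1]$ ($j=-M+1,\dots,M$, $k=2,\dots,s$) such that $$\mathcal{E}^a(\mathbf{Y})=\mathcal{E}^{qc}(\mathbf{Y})+\sum_{j=-M+1}^{M}H_{j+1}C_j\left\{\epsilon H_{j+1}(Y''_{j+1})^2\right\},\qquad C_j:=\sum_{k=2}^{s}\frac{-k^3+k}{12}\,\phi''\Big(k\big(\eta_{jk}Y'_j+(1-\eta_{jk})Y'_{j+1}\big)\Big).$$ (In this sense $\mathcal{E}^{qc}$ is formally a second order approximation of $\mathcal{E}^a$.)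
   Context: All indexed quantities $Y_j,\tilde r_j, X_j, H_j, Y'_j, Y''_j$ are extended to all $j\in\mathbb{Z}$ via the periodic extension of the indices $\ell_j$ and the periodicity of the chain (so e.g. $Y'_{M+1}=Y'_{-M+1}$). *)

theory Defs
  imports "HOL-Analysis.Analysis"
begin

definition C4_on :: "real set \<Rightarrow> (real \<Rightarrow> real) \<Rightarrow> bool" where
  "C4_on S f \<longleftrightarrow> (\<forall>k<4. \<forall>x\<in>S. (deriv ^^ k) f differentiable (at x))
                   \<and> continuous_on S ((deriv ^^ 4) f)"

definition E_at :: "(real \<Rightarrow> real) \<Rightarrow> nat \<Rightarrow> int \<Rightarrow> (int \<Rightarrow> real) \<Rightarrow> real" where
  "E_at phit s N y = (\<Sum>k=1..s. \<Sum>l=-N+1..N. phit (y (l + int k - 1) - y (l - 1)))"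

definition phi_eps :: "(real \<Rightarrow> real) \<Rightarrow> real \<Rightarrow> real \<Rightarrow> real" where
  "phi_eps phit \<epsilon> r = phit (\<epsilon> * r) / \<epsilon>"

definition phi_cb :: "(real \<Rightarrow> real) \<Rightarrow> nat \<Rightarrow> real \<Rightarrow> real" where
  "phi_cb phi s r = (\<Sum>k=1..s. phi (real k * r))"

definition Ynode :: "(int \<Rightarrow> real) \<Rightarrow> (int \<Rightarrow> int) \<Rightarrow> int \<Rightarrow> real" where
  "Ynode y l j = y (l j)"

definition Xnode :: "real \<Rightarrow> (int \<Rightarrow> int) \<Rightarrow> int \<Rightarrow> real" where
  "Xnode \<epsilon> l j = \<epsilon> * real_of_int (l j)"

definition Hnode :: "real \<Rightarrow> (int \<Rightarrow> int) \<Rightarrow> int \<Rightarrow> real" where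
  "Hnode \<epsilon> l j = (Xnode \<epsilon> l j - Xnode \<epsilon> l (j - 2)) / 2"

definition nunode :: "real \<Rightarrow> (int \<Rightarrow> int) \<Rightarrow> int \<Rightarrow> real" where
  "nunode \<epsilon> l j = \<epsilon> * real_of_int (l j - l (j - 1))"

definition Y1 :: "real \<Rightarrow> (int \<Rightarrow> real) \<Rightarrow> (int \<Rightarrow> int) \<Rightarrow> int \<Rightarrow> real" where
  "Y1 \<epsilon> y l j = (Ynode y l j - Ynode y l (j - 1)) / (Xnode \<epsilon> l j - Xnode \<epsilon> l (j - 1))"

definition Y2 :: "real \<Rightarrow> (int \<Rightarrow> real) \<Rightarrow> (int \<Rightarrow> int) \<Rightarrow> int \<Rightarrow> real" where
  "Y2 \<epsilon> y l j = (Y1 \<epsilon> y l j - Y1 \<epsilon> y l (j - 1)) / Hnode \<epsilon> l j"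

definition E_qc :: "(real \<Rightarrow> real) \<Rightarrow> nat \<Rightarrow> int \<Rightarrow> real \<Rightarrow> (int \<Rightarrow> real) \<Rightarrow> (int \<Rightarrow> int) \<Rightarrow> real" where
  "E_qc phit s M \<epsilon> y l =
     (\<Sum>j=-M+1..M. nunode \<epsilon> l j * phi_cb (phi_eps phit \<epsilon>) s (Y1 \<epsilon> y l j))"

end

(*
  In an element j of the piecewise affine chain all bonds of range k
  starting in the element have length k r_j, except the k - 1 bonds that straddle
  the node between the elements j and j + 1, whose lengths are i r_j + (k - i) r_(j+1),
  0 < i < k. Counting the straddling bonds as (k - 1)/2 bonds of length k r_j plus
  (k - 1)/2 of length k r_(j+1) and using periodicity to shift the latter to element
  j + 1 gives exactly the Cauchy-Born energy; the error is the defect of the discrete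
  trapezoidal rule for i |-> phi(i r_j + (k - i) r_(j+1)). Summation by parts against
  the weights i (k - i), which sum to k (k^2 - 1)/6, turns this defect into a weighted
  mean of second differences, i.e. of (r_j - r_(j+1))^2 phi'' at intermediate points,
  and the intermediate value theorem for phi'' collapses the mean to one point.
*)
theory Submission
  imports Defs
begin

section \<open>Second differences and the discrete trapezoidal rule\<close>

lemma taylor_order2_closed_segment:
  fixes f :: "real \<Rightarrow> real"
  assumes f2: "\<And>t. t \<in> closed_segment c x \<Longrightarrow> f differentiable at t \<and> deriv f differentiable at t"
  shows "\<exists>t\<in>closed_segment c x.
           f x = f c + deriv f c * (x - c) + deriv (deriv f) t / 2 * (x - c)^2"
proof (cases "x = c")
  case True
  then show ?thesis by auto
next
  case False
  have "\<forall>m t. m < 2 \<and> min c x \<le> t \<and> t \<le> max c x \<longrightarrow>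
      DERIV ((deriv ^^ m) f) t :> (deriv ^^ Suc m) f t"
  proof (intro allI impI)
    fix m :: nat and t :: real assume mt: "m < 2 \<and> min c x \<le> t \<and> t \<le> max c x"
    then have "t \<in> closed_segment c x"
      by (auto simp: closed_segment_eq_real_ivl)
    with mt f2 show "DERIV ((deriv ^^ m) f) t :> (deriv ^^ Suc m) f t"
      by (auto simp: less_2_cases_iff DERIV_deriv_iff_real_differentiable)
  qed
  from Taylor[of 2 "\<lambda>m. (deriv ^^ m) f", OF _ _ this _ _ _ _ False]
  obtain t where t: "if x < c then x < t \<and> t < c else c < t \<and> t < x"
    and "f x = (\<Sum>m<2. (deriv ^^ m) f c / fact m * (x - c)^m) + (deriv ^^ 2) f t / fact 2 * (x - c)^2"
    by auto
  then have "f x = f c + deriv f c * (x - c) + deriv (deriv f) t / 2 * (x - c)^2"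
    by (simp add: numeral_2_eq_2)
  moreover have "t \<in> closed_segment c x"
    using t by (auto simp: closed_segment_eq_real_ivl split: if_splits)
  ultimately show ?thesis by blast
qed

lemma second_difference_eq_deriv2:
  fixes f :: "real \<Rightarrow> real"
  assumes f2: "\<And>t. t \<in> closed_segment (c - d) (c + d) \<Longrightarrow> f differentiable at t \<and> deriv f differentiable at t"
    and cont: "continuous_on (closed_segment (c - d) (c + d)) (deriv (deriv f))"
  shows "\<exists>\<xi>\<in>closed_segment (c - d) (c + d). f (c + d) - 2 * f c + f (c - d) = d^2 * deriv (deriv f) \<xi>"
proof -
  let ?I = "closed_segment (c - d) (c + d)"
  have c: "c \<in> ?I"
    by (auto simp: closed_segment_eq_real_ivl)
  have sub: "closed_segment c x \<subseteq> ?I" if "x \<in> ?I" for x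
    using c that by (simp add: closed_segment_subset)
  obtain t1 where t1: "t1 \<in> ?I"
    and e1: "f (c + d) = f c + deriv f c * d + deriv (deriv f) t1 / 2 * d^2"
    using taylor_order2_closed_segment[of c "c + d" f] f2 sub[of "c + d"] by auto
  obtain t2 where t2: "t2 \<in> ?I"
    and e2: "f (c - d) = f c - deriv f c * d + deriv (deriv f) t2 / 2 * d^2"
    using taylor_order2_closed_segment[of c "c - d" f] f2 sub[of "c - d"] by auto
  let ?m = "(deriv (deriv f) t1 + deriv (deriv f) t2) / 2"
  have "?m \<in> closed_segment (deriv (deriv f) t1) (deriv (deriv f) t2)"
    by (auto simp: closed_segment_eq_real_ivl)
  moreover have "continuous_on (closed_segment t1 t2) (deriv (deriv f))"
    using cont t1 t2 by (meson closed_segment_subset continuous_on_subset convex_closed_segment)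
  ultimately obtain \<xi> where "\<xi> \<in> closed_segment t1 t2" "deriv (deriv f) \<xi> = ?m"
    using IVT'_closed_segment_real by blast
  moreover have "closed_segment t1 t2 \<subseteq> ?I"
    using t1 t2 by (simp add: closed_segment_subset)
  moreover have "f (c + d) - 2 * f c + f (c - d) = d^2 * ?m"
    using e1 e2 by (simp add: algebra_simps)
  ultimately show ?thesis by (metis subsetD)
qed

lemma weighted_sum_eq_continuous_value:
  fixes g :: "real \<Rightarrow> real" and w :: "'a \<Rightarrow> real"
  assumes "finite I" and "continuous_on T g" and "is_interval T"
    and "\<And>i. i \<in> I \<Longrightarrow> 0 \<le> w i" and "sum w I > 0" and "\<And>i. i \<in> I \<Longrightarrow> \<xi> i \<in> T"
  shows "\<exists>\<xi>'\<in>T. (\<Sum>i\<in>I. w i * g (\<xi> i)) = sum w I * g \<xi>'"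
proof -
  have "convex (g ` T)"
    using assms(2,3) connected_continuous_image is_interval_connected is_interval_convex_1
      is_interval_connected_1 by blast
  then have "(\<Sum>i\<in>I. (w i / sum w I) *\<^sub>R g (\<xi> i)) \<in> g ` T"
    using assms by (intro convex_sum) (auto simp: sum_divide_distrib[symmetric])
  then obtain \<xi>' where "\<xi>' \<in> T" "(\<Sum>i\<in>I. (w i / sum w I) * g (\<xi> i)) = g \<xi>'"
    by auto
  moreover have "(\<Sum>i\<in>I. w i * g (\<xi> i)) = sum w I * (\<Sum>i\<in>I. (w i / sum w I) * g (\<xi> i))"
    using assms(5) by (simp add: sum_distrib_left)
  ultimately show ?thesis by metis
qed

lemma sum_parabolic_weights_second_diff_gen:
  fixes F :: "nat \<Rightarrow> real" and K :: real
  shows "(\<Sum>i\<in>{1..<Suc n}. real i * (K - real i) * (F (i + 1) - 2 * F i + F (i - 1)))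
     = real n * (K - real n) * (F (Suc n) - F n) - (K + 1 - 2 * real n) * F n + (K + 1) * F 0
       - 2 * (\<Sum>i<n. F i)"
proof (induction n)
  case (Suc n)
  have "{1..<Suc (Suc n)} = insert (Suc n) {1..<Suc n}" by auto
  with Suc show ?case by (simp add: algebra_simps)
qed simp

lemma sum_parabolic_weights_second_diff:
  fixes F :: "nat \<Rightarrow> real"
  assumes "1 \<le> k"
  shows "(\<Sum>i\<in>{1..<k}. real i * (real k - real i) * (F (i + 1) - 2 * F i + F (i - 1)))
     = (real k - 1) * (F 0 + F k) - 2 * (\<Sum>i\<in>{1..<k}. F i)"
proof -
  obtain n where n: "k = Suc n" using assms by (cases k) auto
  have "{..<k} = insert 0 {1..<k}" using assms by auto
  then have "(\<Sum>i\<in>{1..<k}. F i) = (\<Sum>i<k. F i) - F 0" by simp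
  then show ?thesis
    using sum_parabolic_weights_second_diff_gen[of "real k" F n] by (simp add: n algebra_simps)
qed

lemma sum_parabolic_weights:
  fixes k :: nat
  shows "(\<Sum>i\<in>{1..<k}. real i * (real k - real i)) = real k * (real k ^ 2 - 1) / 6"
proof -
  have "(\<Sum>i\<in>{1..<n}. real i * (K - real i))
      = K * real n * (real n - 1) / 2 - (real n - 1) * real n * (2 * real n - 1) / 6" for n K
  proof (induction n)
    case (Suc n)
    show ?case
    proof (cases "n = 0")
      case False
      then have "{1..<Suc n} = insert n {1..<n}" by auto
      with Suc show ?thesis by (simp add: field_simps)
    qed simp
  qed simp
  from this[where n = k and K = "real k"] show ?thesis
    by (simp add: field_simps power2_eq_square)
qed

lemma grid_point_in_segment:
  fixes a d :: real
  assumes "i \<le> k"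
  shows "a + real i * d \<in> closed_segment a (a + real k * d)"
proof (cases "k = 0")
  case False
  have "a + real i * d = (1 - real i / real k) * a + (real i / real k) * (a + real k * d)"
    using False by (simp add: field_simps)
  then show ?thesis
    using assms False unfolding closed_segment_def by (auto intro!: exI[of _ "real i / real k"])
qed (use assms in simp)

lemma second_difference_on_grid:
  fixes f :: "real \<Rightarrow> real"
  assumes i: "1 \<le> i" "i < k"
    and f2: "\<And>t. t \<in> closed_segment a (a + real k * d) \<Longrightarrow>
               f differentiable at t \<and> deriv f differentiable at t"
    and cont: "continuous_on (closed_segment a (a + real k * d)) (deriv (deriv f))"
  shows "\<exists>\<xi>\<in>closed_segment a (a + real k * d).
           f (a + real (i + 1) * d) - 2 * f (a + real i * d) + f (a + real (i - 1) * d)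
           = d^2 * deriv (deriv f) \<xi>"
proof -
  let ?c = "a + real i * d"
  have "?c - d = a + real (i - 1) * d" "?c + d = a + real (i + 1) * d"
    using i by (simp_all add: of_nat_diff algebra_simps)
  moreover have sub: "closed_segment (?c - d) (?c + d) \<subseteq> closed_segment a (a + real k * d)"
    unfolding calculation using i
    by (intro closed_segment_subset grid_point_in_segment convex_closed_segment) auto
  moreover obtain \<xi> where "\<xi> \<in> closed_segment (?c - d) (?c + d)"
    and "f (?c + d) - 2 * f ?c + f (?c - d) = d^2 * deriv (deriv f) \<xi>"
    using second_difference_eq_deriv2[of ?c d f] f2 continuous_on_subset[OF cont] sub
    by blast
  ultimately show ?thesis
    by (metis subsetD)
qed

lemma trapezoid_rule_deriv2:
  fixes f :: "real \<Rightarrow> real" and k :: nat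
  assumes k: "1 \<le> k"
    and f2: "\<And>t. t \<in> closed_segment a (a + real k * d) \<Longrightarrow>
               f differentiable at t \<and> deriv f differentiable at t"
    and cont: "continuous_on (closed_segment a (a + real k * d)) (deriv (deriv f))"
  shows "\<exists>\<zeta>\<in>closed_segment a (a + real k * d).
           (\<Sum>i\<in>{1..<k}. f (a + real i * d))
           = (real k - 1) / 2 * (f a + f (a + real k * d))
             - d^2 * (real k * (real k ^ 2 - 1) / 12) * deriv (deriv f) \<zeta>"
proof (cases "k = 1")
  case True
  then show ?thesis by auto
next
  case False
  with k have k2: "2 \<le> k" by auto
  let ?I = "closed_segment a (a + real k * d)"
  define w where "w i = real i * (real k - real i)" for i
  obtain \<xi> where \<xi>: "\<And>i. i \<in> {1..<k} \<Longrightarrow> \<xi> i \<in> ?I \<and>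
      f (a + real (i + 1) * d) - 2 * f (a + real i * d) + f (a + real (i - 1) * d)
      = d^2 * deriv (deriv f) (\<xi> i)"
    using second_difference_on_grid[OF _ _ f2 cont] by (metis atLeastLessThan_iff)
  have W: "sum w {1..<k} = real k * (real k ^ 2 - 1) / 6"
    unfolding w_def by (rule sum_parabolic_weights)
  have "real k ^ 2 \<ge> 2 ^ 2"
    using k2 by (intro power_mono) auto
  then have "sum w {1..<k} > 0"
    unfolding W using k2 by auto
  then obtain \<zeta> where \<zeta>: "\<zeta> \<in> ?I"
    and "(\<Sum>i\<in>{1..<k}. w i * deriv (deriv f) (\<xi> i)) = sum w {1..<k} * deriv (deriv f) \<zeta>"
    using weighted_sum_eq_continuous_value[of "{1..<k}" ?I "deriv (deriv f)" w \<xi>] cont \<xi>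
    by (auto simp: w_def)
  moreover have "(real k - 1) * (f a + f (a + real k * d)) - 2 * (\<Sum>i\<in>{1..<k}. f (a + real i * d))
      = d^2 * (\<Sum>i\<in>{1..<k}. w i * deriv (deriv f) (\<xi> i))"
    using sum_parabolic_weights_second_diff[OF k, of "\<lambda>i. f (a + real i * d)"] \<xi>
    by (simp add: w_def sum_distrib_left mult_ac)
  ultimately have "2 * (\<Sum>i\<in>{1..<k}. f (a + real i * d))
      = (real k - 1) * (f a + f (a + real k * d)) - d^2 * (sum w {1..<k} * deriv (deriv f) \<zeta>)"
    by simp
  then show ?thesis
    unfolding W using \<zeta> by (intro bexI[of _ \<zeta>]) (simp_all add: field_simps)
qed

lemma sum_trapezoid_deriv2:
  fixes f :: "real \<Rightarrow> real" and k :: nat and p q :: real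
  assumes k: "1 \<le> k"
    and f2: "\<And>t. t \<in> closed_segment (real k * p) (real k * q) \<Longrightarrow>
               f differentiable at t \<and> deriv f differentiable at t"
    and cont: "continuous_on (closed_segment (real k * p) (real k * q)) (deriv (deriv f))"
  shows "\<exists>\<eta>\<in>{0..1}. (\<Sum>i\<in>{1..<k}. f (real i * p + (real k - real i) * q))
           = (real k - 1) / 2 * (f (real k * p) + f (real k * q))
             + (- (real k ^ 3) + real k) / 12 * deriv (deriv f) (real k * (\<eta> * p + (1 - \<eta>) * q)) * (p - q)^2"
proof -
  have seg: "closed_segment (real k * q) (real k * q + real k * (p - q))
      = closed_segment (real k * p) (real k * q)"
    by (simp add: algebra_simps closed_segment_commute)
  obtain \<zeta> where "\<zeta> \<in> closed_segment (real k * q) (real k * p)"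
    and sum_eq: "(\<Sum>i\<in>{1..<k}. f (real k * q + real i * (p - q)))
      = (real k - 1) / 2 * (f (real k * q) + f (real k * p))
        - (p - q)^2 * (real k * (real k ^ 2 - 1) / 12) * deriv (deriv f) \<zeta>"
    using trapezoid_rule_deriv2[OF k, of "real k * q" "p - q" f] f2 cont seg
    by (auto simp: algebra_simps closed_segment_commute)
  then obtain \<eta> where \<eta>: "\<eta> \<in> {0..1}" and "\<zeta> = (1 - \<eta>) * (real k * q) + \<eta> * (real k * p)"
    unfolding closed_segment_def by auto
  then have \<zeta>_eq: "\<zeta> = real k * (\<eta> * p + (1 - \<eta>) * q)"
    by (simp add: algebra_simps)
  have grid_eq: "real k * q + real i * (p - q) = real i * p + (real k - real i) * q" for i
    by (simp add: algebra_simps)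
  have coeff: "(p - q)^2 * (real k * (real k ^ 2 - 1) / 12) = - ((- (real k ^ 3) + real k) / 12 * (p - q)^2)"
    by (simp add: field_simps power3_eq_cube power2_eq_square)
  show ?thesis
    using sum_eq \<eta> unfolding grid_eq \<zeta>_eq coeff by (intro bexI[of _ \<eta>]) (auto simp: algebra_simps)
qed

lemma strict_mono_int_step:
  fixes f :: "int \<Rightarrow> 'a::order"
  assumes step: "\<And>j. f (j - 1) < f j"
  shows "strict_mono f"
proof (rule strict_monoI)
  fix i j :: int
  assume "i < j"
  then have "i + 1 \<le> j" by simp
  then show "f i < f j"
  proof (induction j rule: int_ge_induct)
    case base
    show ?case using step[of "i + 1"] by simp
  next
    case (step j)
    then show ?case using assms[of "j + 1"] by simp
  qed
qed

lemma sum_split_at_partition: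
  fixes l :: "int \<Rightarrow> int" and g :: "int \<Rightarrow> 'a::comm_monoid_add"
  assumes "mono l" and "A \<le> B"
  shows "(\<Sum>a\<in>{l A..<l B}. g a) = (\<Sum>j\<in>{A<..B}. \<Sum>a\<in>{l (j - 1)..<l j}. g a)"
  using \<open>A \<le> B\<close>
proof (induction B rule: int_ge_induct)
  case (step B)
  have "{l A..<l (B + 1)} = {l A..<l B} \<union> {l B..<l (B + 1)}"
    using \<open>mono l\<close> step.hyps by (auto dest: monoD[of l A B] monoD[of l B "B + 1"])
  moreover have "{A<..B + 1} = insert (B + 1) {A<..B}"
    using step.hyps by auto
  ultimately show ?case
    using step.IH by (simp add: sum.union_disjoint ivl_disj_int_two(3) add.commute)
qed simp

lemma sum_cyclic_shift:
  fixes g :: "int \<Rightarrow> 'a::comm_monoid_add"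
  assumes "a \<le> b" and "g (b + 1) = g a"
  shows "(\<Sum>j=a..b. g (j + 1)) = (\<Sum>j=a..b. g j)"
proof -
  have "(\<Sum>j=a..b. g (j + 1)) = (\<Sum>j=a+1..b+1. g j)"
    by (rule sum.reindex_bij_witness[of _ "\<lambda>j. j - 1" "\<lambda>j. j + 1"]) auto
  also have "{a+1..b+1} = insert (b + 1) {a+1..b}"
    using assms(1) by auto
  also have "{a..b} = insert a {a+1..b}"
    using assms(1) by auto
  ultimately show ?thesis
    using assms(2) by simp
qed

lemma C4_on_twice_differentiable:
  assumes "C4_on S f" and "x \<in> S"
  shows "f differentiable at x \<and> deriv f differentiable at x"
proof -
  have "\<forall>k<4. (deriv ^^ k) f differentiable at x"
    using assms unfolding C4_on_def by blast
  from this[rule_format, of 0] this[rule_format, of 1] show ?thesis by simp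
qed

lemma C4_on_continuous_deriv2:
  assumes "C4_on S f"
  shows "continuous_on S (deriv (deriv f))"
proof (rule continuous_at_imp_continuous_on, rule ballI)
  fix x assume "x \<in> S"
  with assms have "(deriv ^^ 2) f differentiable at x"
    unfolding C4_on_def by simp
  then show "isCont (deriv (deriv f)) x"
    by (simp add: numeral_2_eq_2 differentiable_imp_continuous_within)
qed

lemma deriv_phi_eps:
  fixes f :: "real \<Rightarrow> real"
  assumes "f differentiable at (\<epsilon> * x)" and "0 < \<epsilon>"
  shows "deriv (phi_eps f \<epsilon>) x = deriv f (\<epsilon> * x)"
proof -
  have "(f has_field_derivative deriv f (\<epsilon> * x)) (at (\<epsilon> * x))"
    using assms(1) by (simp add: DERIV_deriv_iff_real_differentiable)
  from DERIV_cdivide[OF DERIV_chain2[OF this DERIV_cmult_Id], of \<epsilon>]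
  have "(phi_eps f \<epsilon> has_field_derivative deriv f (\<epsilon> * x)) (at x)"
    using assms(2) by (simp add: phi_eps_def[abs_def])
  then show ?thesis by (rule DERIV_imp_deriv)
qed

lemma deriv2_phi_eps:
  fixes f :: "real \<Rightarrow> real"
  assumes f2: "\<And>x. 0 < x \<Longrightarrow> f differentiable at x \<and> deriv f differentiable at x"
    and "0 < \<epsilon>" and "0 < x"
  shows "deriv (deriv (phi_eps f \<epsilon>)) x = \<epsilon> * deriv (deriv f) (\<epsilon> * x)"
proof -
  have "(deriv f has_field_derivative deriv (deriv f) (\<epsilon> * x)) (at (\<epsilon> * x))"
    using f2[of "\<epsilon> * x"] assms by (simp add: DERIV_deriv_iff_real_differentiable)
  from DERIV_chain2[OF this DERIV_cmult_Id]
  have "((\<lambda>z. deriv f (\<epsilon> * z)) has_field_derivative deriv (deriv f) (\<epsilon> * x) * \<epsilon>) (at x)" .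
  then have "(deriv (phi_eps f \<epsilon>) has_field_derivative deriv (deriv f) (\<epsilon> * x) * \<epsilon>) (at x)"
    by (rule has_field_derivative_transform_within_open[of _ _ _ "{0<..}"])
       (use assms f2 deriv_phi_eps in auto)
  then show ?thesis by (simp add: DERIV_imp_deriv mult.commute)
qed

section \<open>Piecewise affine chains\<close>

locale interpolated_chain =
  fixes y :: "int \<Rightarrow> real" and l :: "int \<Rightarrow> int" and s :: nat
  assumes y_strict_mono: "strict_mono y"
    and s_pos: "1 \<le> s"
    and element_length_ge: "\<And>j. l j - l (j - 1) \<ge> int s"
    and interp: "\<And>j i. 0 \<le> i \<Longrightarrow> i \<le> l j - l (j - 1) \<Longrightarrow>
                   y (l (j - 1) + i) = Ynode y l (j - 1)
                     + real_of_int i * ((Ynode y l j - Ynode y l (j - 1)) / real_of_int (l j - l (j - 1)))"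
begin

definition \<nu> :: "int \<Rightarrow> nat" where
  "\<nu> j = nat (l j - l (j - 1))"

definition slope :: "int \<Rightarrow> real" where
  "slope j = (y (l j) - y (l (j - 1))) / real_of_int (l j - l (j - 1))"

lemma l_less: "l (j - 1) < l j"
  using element_length_ge[of j] s_pos by linarith

lemma l_strict_mono: "strict_mono l"
  using l_less by (rule strict_mono_int_step)

lemma of_nat_\<nu>: "int (\<nu> j) = l j - l (j - 1)"
  using l_less[of j] by (simp add: \<nu>_def)

lemma s_le_\<nu>: "s \<le> \<nu> j"
  using element_length_ge[of j] of_nat_\<nu>[of j] by linarith

lemma slope_pos: "0 < slope j"
  using l_less[of j] y_strict_mono by (simp add: slope_def strict_mono_less)

lemma y_on_element: "i \<le> \<nu> j \<Longrightarrow> y (l (j - 1) + int i) = y (l (j - 1)) + real i * slope j"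
  using interp[of "int i" j] of_nat_\<nu>[of j] by (simp add: Ynode_def slope_def)

lemma bond_on_element:
  assumes t: "t < \<nu> j" and k: "k \<le> s"
  shows "y (l (j - 1) + int t + int k) - y (l (j - 1) + int t)
    = (if t + k \<le> \<nu> j then real k * slope j
       else real (\<nu> j - t) * slope j + (real k - real (\<nu> j - t)) * slope (j + 1))"
proof (cases "t + k \<le> \<nu> j")
  case True
  then show ?thesis
    using y_on_element[of "t + k" j] y_on_element[of t j] t by (simp add: add.assoc algebra_simps)
next
  case False
  define m where "m = t + k - \<nu> j"
  have "l (j - 1) + int t + int k = l (j + 1 - 1) + int m"
    using of_nat_\<nu>[of j] False by (simp add: m_def)
  moreover have "m \<le> \<nu> (j + 1)"
    using s_le_\<nu>[of "j + 1"] k t by (simp add: m_def)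
  ultimately have "y (l (j - 1) + int t + int k) = y (l j) + real m * slope (j + 1)"
    using y_on_element[of m "j + 1"] by simp
  moreover have "y (l j) = y (l (j - 1)) + real (\<nu> j) * slope j"
    using y_on_element[of "\<nu> j" j] of_nat_\<nu>[of j] by simp
  ultimately show ?thesis
    using False t y_on_element[of t j] by (simp add: m_def of_nat_diff algebra_simps)
qed

lemma sum_bonds_on_element:
  assumes k: "1 \<le> k" "k \<le> s"
  shows "(\<Sum>a\<in>{l (j - 1)..<l j}. f (y (a + int k) - y a))
    = real (\<nu> j - k + 1) * f (real k * slope j)
      + (\<Sum>i\<in>{1..<k}. f (real i * slope j + (real k - real i) * slope (j + 1)))"
proof -
  let ?L = "l (j - 1)" and ?n = "\<nu> j"
  let ?h = "\<lambda>t. f (y (?L + int t + int k) - y (?L + int t))"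
  have kn: "k \<le> ?n" using k s_le_\<nu>[of j] by simp
  have "(\<Sum>a\<in>{?L..<l j}. f (y (a + int k) - y a)) = (\<Sum>t<?n. ?h t)"
    using of_nat_\<nu>[of j]
    by (intro sum.reindex_bij_witness[of _ "\<lambda>t. ?L + int t" "\<lambda>a. nat (a - ?L)"]) (auto simp: add.assoc)
  also have "{..<?n} = {..<?n - k + 1} \<union> {?n - k + 1..<?n}"
    using kn k by auto
  also have "(\<Sum>t\<in>{..<?n - k + 1} \<union> {?n - k + 1..<?n}. ?h t)
      = (\<Sum>t<?n - k + 1. ?h t) + (\<Sum>t\<in>{?n - k + 1..<?n}. ?h t)"
    by (rule sum.union_disjoint) auto
  also have "(\<Sum>t<?n - k + 1. ?h t) = (\<Sum>t<?n - k + 1. f (real k * slope j))"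
    using kn k bond_on_element[of _ j k] by (intro sum.cong) auto
  also have "(\<Sum>t\<in>{?n - k + 1..<?n}. ?h t)
      = (\<Sum>t\<in>{?n - k + 1..<?n}. f (real (?n - t) * slope j + (real k - real (?n - t)) * slope (j + 1)))"
    using kn k bond_on_element[of _ j k] by (intro sum.cong) auto
  also have "\<dots> = (\<Sum>i\<in>{1..<k}. f (real i * slope j + (real k - real i) * slope (j + 1)))"
    using kn by (intro sum.reindex_bij_witness[of _ "\<lambda>i. ?n - i" "\<lambda>t. ?n - t"]) auto
  finally show ?thesis by simp
qed

text \<open>The k-th neighbour bonds straddling the node between the elements j and j + 1,
  minus their trapezoidal share of the Cauchy-Born energies of the two elements.\<close>
definition interface_energy :: "(real \<Rightarrow> real) \<Rightarrow> int \<Rightarrow> nat \<Rightarrow> real" where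
  "interface_energy f j k =
     (\<Sum>i\<in>{1..<k}. f (real i * slope j + (real k - real i) * slope (j + 1)))
     - (real k - 1) / 2 * (f (real k * slope j) + f (real k * slope (j + 1)))"

lemma interface_energy_expansion:
  fixes f :: "real \<Rightarrow> real"
  assumes f2: "\<And>x. 0 < x \<Longrightarrow> f differentiable at x \<and> deriv f differentiable at x"
    and cont: "continuous_on {0<..} (deriv (deriv f))"
  obtains \<eta> :: "int \<Rightarrow> nat \<Rightarrow> real" where "\<And>j k. 1 \<le> k \<Longrightarrow> \<eta> j k \<in> {0..1}"
    and "\<And>j k. 1 \<le> k \<Longrightarrow> interface_energy f j k
           = (- (real k ^ 3) + real k) / 12
             * deriv (deriv f) (real k * (\<eta> j k * slope j + (1 - \<eta> j k) * slope (j + 1)))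
             * (slope j - slope (j + 1))\<^sup>2"
proof -
  let ?P = "\<lambda>j k \<eta>. \<eta> \<in> {0..1} \<and> interface_energy f j k
      = (- (real k ^ 3) + real k) / 12
        * deriv (deriv f) (real k * (\<eta> * slope j + (1 - \<eta>) * slope (j + 1)))
        * (slope j - slope (j + 1))\<^sup>2"
  have ex: "\<exists>\<eta>. ?P j k \<eta>" if k: "1 \<le> k" for j k
  proof -
    have pos: "closed_segment (real k * slope j) (real k * slope (j + 1)) \<subseteq> {0<..}"
      using k slope_pos by (intro closed_segment_subset) auto
    obtain \<eta> where "\<eta> \<in> {0..1}" and
      "(\<Sum>i\<in>{1..<k}. f (real i * slope j + (real k - real i) * slope (j + 1)))
        = (real k - 1) / 2 * (f (real k * slope j) + f (real k * slope (j + 1)))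
          + (- (real k ^ 3) + real k) / 12
            * deriv (deriv f) (real k * (\<eta> * slope j + (1 - \<eta>) * slope (j + 1)))
            * (slope j - slope (j + 1))\<^sup>2"
    proof (rule bexE[OF sum_trapezoid_deriv2[OF k]])
      show "continuous_on (closed_segment (real k * slope j) (real k * slope (j + 1))) (deriv (deriv f))"
        using continuous_on_subset[OF cont pos] .
    qed (use f2 pos in auto)
    then show ?thesis
      unfolding interface_energy_def by auto
  qed
  have "?P j k (SOME \<eta>. ?P j k \<eta>)" if "1 \<le> k" for j k
    using ex[OF that] by (rule someI_ex)
  then show ?thesis
    using that[of "\<lambda>j k. SOME \<eta>. ?P j k \<eta>"] by blast
qed

lemma Y1_eq_slope: "\<epsilon> \<noteq> 0 \<Longrightarrow> Y1 \<epsilon> y l j = slope j / \<epsilon>"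
  unfolding Y1_def Ynode_def Xnode_def slope_def by (simp add: right_diff_distrib[symmetric])

lemma nunode_eq: "nunode \<epsilon> l j = \<epsilon> * real (\<nu> j)"
  unfolding nunode_def by (metis of_nat_\<nu> of_int_of_nat_eq)

lemma Hnode_pos: "0 < \<epsilon> \<Longrightarrow> 0 < Hnode \<epsilon> l j"
  using strict_monoD[OF l_strict_mono, of "j - 2" j]
  by (simp add: Hnode_def Xnode_def right_diff_distrib[symmetric])

lemma Hnode_mult_Y2: "0 < \<epsilon> \<Longrightarrow> Hnode \<epsilon> l j * Y2 \<epsilon> y l j = (slope j - slope (j - 1)) / \<epsilon>"
  using Hnode_pos[of \<epsilon> j] unfolding Y2_def by (simp add: Y1_eq_slope field_simps)

lemma E_qc_eq:
  assumes "0 < \<epsilon>"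
  shows "E_qc f s M \<epsilon> y l = (\<Sum>j=-M+1..M. real (\<nu> j) * (\<Sum>k=1..s. f (real k * slope j)))"
  unfolding E_qc_def
proof (rule sum.cong[OF refl])
  fix j
  show "nunode \<epsilon> l j * phi_cb (phi_eps f \<epsilon>) s (Y1 \<epsilon> y l j) = real (\<nu> j) * (\<Sum>k=1..s. f (real k * slope j))"
    using assms by (simp add: nunode_eq Y1_eq_slope phi_cb_def phi_eps_def sum_divide_distrib[symmetric])
qed

lemma correction_term_eq_slopes:
  assumes f2: "\<And>x. 0 < x \<Longrightarrow> f differentiable at x \<and> deriv f differentiable at x"
    and \<epsilon>: "0 < \<epsilon>" and \<eta>: "\<And>k. k \<in> {2..s} \<Longrightarrow> \<eta> k \<in> {0..1}"
  shows "Hnode \<epsilon> l (j + 1)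
      * (\<Sum>k=2..s. (- (real k ^ 3) + real k) / 12
           * deriv (deriv (phi_eps f \<epsilon>)) (real k * (\<eta> k * Y1 \<epsilon> y l j + (1 - \<eta> k) * Y1 \<epsilon> y l (j + 1))))
      * (\<epsilon> * Hnode \<epsilon> l (j + 1) * (Y2 \<epsilon> y l (j + 1))\<^sup>2)
    = (\<Sum>k=2..s. (- (real k ^ 3) + real k) / 12
           * deriv (deriv f) (real k * (\<eta> k * slope j + (1 - \<eta> k) * slope (j + 1)))
           * (slope j - slope (j + 1))\<^sup>2)" (is "?lhs = ?rhs")
proof -
  have deriv2: "deriv (deriv (phi_eps f \<epsilon>)) (real k * (\<eta> k * Y1 \<epsilon> y l j + (1 - \<eta> k) * Y1 \<epsilon> y l (j + 1)))
      = \<epsilon> * deriv (deriv f) (real k * (\<eta> k * slope j + (1 - \<eta> k) * slope (j + 1)))"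
    if k: "k \<in> {2..s}" for k
  proof -
    define z where "z = real k * (\<eta> k * slope j + (1 - \<eta> k) * slope (j + 1))"
    have "0 < \<eta> k * slope j + (1 - \<eta> k) * slope (j + 1)"
      using convex_bound_lt[of "- slope j" 0 "- slope (j + 1)" "\<eta> k" "1 - \<eta> k"] \<eta>[OF k]
        slope_pos[of j] slope_pos[of "j + 1"] by simp
    then have "0 < z / \<epsilon>"
      using k \<epsilon> by (simp add: z_def)
    moreover have "real k * (\<eta> k * Y1 \<epsilon> y l j + (1 - \<eta> k) * Y1 \<epsilon> y l (j + 1)) = z / \<epsilon>"
      using \<epsilon> by (simp add: z_def Y1_eq_slope field_simps)
    ultimately show ?thesis
      using deriv2_phi_eps[OF f2 \<epsilon>, of "z / \<epsilon>"] \<epsilon> by (simp add: z_def)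
  qed
  have sum_eq: "(\<Sum>k=2..s. (- (real k ^ 3) + real k) / 12
           * deriv (deriv (phi_eps f \<epsilon>)) (real k * (\<eta> k * Y1 \<epsilon> y l j + (1 - \<eta> k) * Y1 \<epsilon> y l (j + 1))))
      = \<epsilon> * (\<Sum>k=2..s. (- (real k ^ 3) + real k) / 12
           * deriv (deriv f) (real k * (\<eta> k * slope j + (1 - \<eta> k) * slope (j + 1))))"
    unfolding sum_distrib_left by (intro sum.cong) (simp_all add: deriv2)
  have "Hnode \<epsilon> l (j + 1) * (\<epsilon> * Hnode \<epsilon> l (j + 1) * (Y2 \<epsilon> y l (j + 1))\<^sup>2)
      = \<epsilon> * (Hnode \<epsilon> l (j + 1) * Y2 \<epsilon> y l (j + 1))\<^sup>2"
    by (simp add: power2_eq_square)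
  also have "\<dots> = (slope j - slope (j + 1))\<^sup>2 / \<epsilon>"
    using \<epsilon> by (simp add: Hnode_mult_Y2 power2_eq_square field_simps)
  finally have H_Y2: "Hnode \<epsilon> l (j + 1) * (\<epsilon> * Hnode \<epsilon> l (j + 1) * (Y2 \<epsilon> y l (j + 1))\<^sup>2)
      = (slope j - slope (j + 1))\<^sup>2 / \<epsilon>" .
  let ?S = "\<Sum>k=2..s. (- (real k ^ 3) + real k) / 12
           * deriv (deriv f) (real k * (\<eta> k * slope j + (1 - \<eta> k) * slope (j + 1)))"
  have "?lhs = \<epsilon> * ?S * (Hnode \<epsilon> l (j + 1) * (\<epsilon> * Hnode \<epsilon> l (j + 1) * (Y2 \<epsilon> y l (j + 1))\<^sup>2))"
    unfolding sum_eq by (simp only: mult_ac)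
  also have "\<dots> = ?S * (slope j - slope (j + 1))\<^sup>2"
    unfolding H_Y2 using \<epsilon> by simp
  also have "\<dots> = ?rhs"
    by (simp add: sum_distrib_right)
  finally show ?thesis .
qed

end

locale periodic_interpolated_chain = interpolated_chain +
  fixes M N :: int
  assumes M_pos: "1 \<le> M"
    and l_lo: "l (-M) = -N" and l_hi: "l M = N"
    and l_periodic: "\<And>j. l (j + 2 * M) = l j + 2 * N"
    and y_periodic_increments: "\<And>i. y (i + 1 + 2 * N) - y (i + 2 * N) = y (i + 1) - y i"
begin

lemma y_period_increment: "y (i + 2 * N) - y i = y (2 * N) - y 0"
proof (induction i rule: int_induct[where k = 0])
  case (step1 i)
  then show ?case using y_periodic_increments[of i] by (simp add: algebra_simps)
next
  case (step2 i)
  then show ?case using y_periodic_increments[of "i - 1"] by (simp add: algebra_simps)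
qed simp

lemma slope_periodic: "slope (j + 2 * M) = slope j"
proof -
  have "l (j + 2 * M - 1) = l (j - 1) + 2 * N"
    using l_periodic[of "j - 1"] by (simp add: algebra_simps)
  then show ?thesis
    using l_periodic[of j] y_period_increment[of "l j"] y_period_increment[of "l (j - 1)"]
    by (simp add: slope_def algebra_simps)
qed

lemma E_at_eq_sum_elements:
  "E_at f s N y = (\<Sum>k=1..s. \<Sum>j=-M+1..M. real (\<nu> j - k + 1) * f (real k * slope j)
      + (\<Sum>i\<in>{1..<k}. f (real i * slope j + (real k - real i) * slope (j + 1))))"
  unfolding E_at_def
proof (rule sum.cong[OF refl])
  fix k assume k: "k \<in> {1..s}"
  have "(\<Sum>i=-N+1..N. f (y (i + int k - 1) - y (i - 1))) = (\<Sum>a\<in>{l (-M)..<l M}. f (y (a + int k) - y a))"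
    unfolding l_lo l_hi
    by (rule sum.reindex_bij_witness[of _ "\<lambda>a. a + 1" "\<lambda>i. i - 1"]) (auto simp: algebra_simps)
  also have "\<dots> = (\<Sum>j\<in>{-M<..M}. \<Sum>a\<in>{l (j - 1)..<l j}. f (y (a + int k) - y a))"
    using M_pos by (intro sum_split_at_partition strict_mono_mono l_strict_mono) simp
  also have "{-M<..M} = {-M+1..M}"
    by auto
  also have "(\<Sum>j=-M+1..M. \<Sum>a\<in>{l (j - 1)..<l j}. f (y (a + int k) - y a))
      = (\<Sum>j=-M+1..M. real (\<nu> j - k + 1) * f (real k * slope j)
      + (\<Sum>i\<in>{1..<k}. f (real i * slope j + (real k - real i) * slope (j + 1))))"
    using k by (simp add: sum_bonds_on_element)
  finally show "(\<Sum>i=-N+1..N. f (y (i + int k - 1) - y (i - 1))) = \<dots>" .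
qed

lemma E_at_eq_local_plus_interfaces:
  "E_at f s N y = (\<Sum>j=-M+1..M. real (\<nu> j) * (\<Sum>k=1..s. f (real k * slope j)))
     + (\<Sum>j=-M+1..M. \<Sum>k=2..s. interface_energy f j k)"
proof -
  define Q where "Q j k = f (real k * slope j)" for j k
  define G where "G j k = (\<Sum>i\<in>{1..<k}. f (real i * slope j + (real k - real i) * slope (j + 1)))" for j k
  have I: "interface_energy f j k = G j k - (real k - 1) / 2 * (Q j k + Q (j + 1) k)" for j k
    by (simp add: interface_energy_def G_def Q_def)
  have per_k: "(\<Sum>j=-M+1..M. real (\<nu> j - k + 1) * Q j k + G j k)
      = (\<Sum>j=-M+1..M. real (\<nu> j) * Q j k + interface_energy f j k)"
    if k: "k \<in> {1..s}" for k
  proof -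
    have "real (\<nu> j - k + 1) * Q j k + G j k
        = real (\<nu> j) * Q j k + interface_energy f j k + (real k - 1) / 2 * (Q (j + 1) k - Q j k)" for j
      using k s_le_\<nu>[of j] by (simp add: I of_nat_diff algebra_simps)
    then have "(\<Sum>j=-M+1..M. real (\<nu> j - k + 1) * Q j k + G j k)
        = (\<Sum>j=-M+1..M. real (\<nu> j) * Q j k + interface_energy f j k)
          + (real k - 1) / 2 * ((\<Sum>j=-M+1..M. Q (j + 1) k) - (\<Sum>j=-M+1..M. Q j k))"
      by (simp only: sum.distrib sum_subtractf[symmetric] sum_distrib_left)
    moreover have "(\<Sum>j=-M+1..M. Q (j + 1) k) = (\<Sum>j=-M+1..M. Q j k)"
      using M_pos slope_periodic[of "-M + 1"] by (intro sum_cyclic_shift) (simp_all add: Q_def)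
    ultimately show ?thesis by simp
  qed
  have "E_at f s N y = (\<Sum>k=1..s. \<Sum>j=-M+1..M. real (\<nu> j) * Q j k + interface_energy f j k)"
    unfolding E_at_eq_sum_elements Q_def[symmetric] G_def[symmetric] using per_k by simp
  also have "\<dots> = (\<Sum>j=-M+1..M. real (\<nu> j) * (\<Sum>k=1..s. Q j k))
      + (\<Sum>j=-M+1..M. \<Sum>k=1..s. interface_energy f j k)"
    unfolding sum.distrib sum_distrib_left by (intro arg_cong2[where f = "(+)"] sum.swap)
  also have "(\<Sum>j=-M+1..M. \<Sum>k=1..s. interface_energy f j k)
      = (\<Sum>j=-M+1..M. \<Sum>k=2..s. interface_energy f j k)"
  proof -
    have "{1..s} = insert 1 {2..s}"
      using s_pos by auto
    then show ?thesis by (simp add: interface_energy_def)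
  qed
  finally show ?thesis
    unfolding Q_def .
qed

lemma E_at_eq_E_qc_plus_correction:
  assumes f2: "\<And>x. 0 < x \<Longrightarrow> f differentiable at x \<and> deriv f differentiable at x"
    and \<epsilon>: "0 < \<epsilon>" and \<eta>: "\<And>j k. 1 \<le> k \<Longrightarrow> \<eta> j k \<in> {0..1}"
    and expansion: "\<And>j k. 1 \<le> k \<Longrightarrow> interface_energy f j k
           = (- (real k ^ 3) + real k) / 12
             * deriv (deriv f) (real k * (\<eta> j k * slope j + (1 - \<eta> j k) * slope (j + 1)))
             * (slope j - slope (j + 1))\<^sup>2"
  shows "E_at f s N y =
           E_qc f s M \<epsilon> y l
           + (\<Sum>j=-M+1..M. Hnode \<epsilon> l (j + 1)
                * (\<Sum>k=2..s. (- (real k ^ 3) + real k) / 12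
                     * deriv (deriv (phi_eps f \<epsilon>))
                         (real k * (\<eta> j k * Y1 \<epsilon> y l j + (1 - \<eta> j k) * Y1 \<epsilon> y l (j + 1))))
                * (\<epsilon> * Hnode \<epsilon> l (j + 1) * (Y2 \<epsilon> y l (j + 1))\<^sup>2))"
proof -
  have "(\<Sum>k=2..s. interface_energy f j k)
      = Hnode \<epsilon> l (j + 1)
        * (\<Sum>k=2..s. (- (real k ^ 3) + real k) / 12
             * deriv (deriv (phi_eps f \<epsilon>))
                 (real k * (\<eta> j k * Y1 \<epsilon> y l j + (1 - \<eta> j k) * Y1 \<epsilon> y l (j + 1))))
        * (\<epsilon> * Hnode \<epsilon> l (j + 1) * (Y2 \<epsilon> y l (j + 1))\<^sup>2)"
    (is "?lhs = ?rhs") for j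
  proof -
    have "?lhs = (\<Sum>k=2..s. (- (real k ^ 3) + real k) / 12
             * deriv (deriv f) (real k * (\<eta> j k * slope j + (1 - \<eta> j k) * slope (j + 1)))
             * (slope j - slope (j + 1))\<^sup>2)"
      by (intro sum.cong refl, subst expansion) auto
    also have "\<dots> = ?rhs"
      by (rule correction_term_eq_slopes[symmetric]) (use f2 \<epsilon> \<eta> in auto)
    finally show ?thesis .
  qed
  then show ?thesis
    unfolding E_at_eq_local_plus_interfaces E_qc_eq[OF \<epsilon>] by (simp only:)
qed

end

theorem proposition2p1:
  fixes s :: nat and M N :: int and phit :: "real \<Rightarrow> real" and rstar \<epsilon> :: real
    and y :: "int \<Rightarrow> real" and l :: "int \<Rightarrow> int"
  assumes s: "s \<ge> 1" and MN: "1 \<le> M" "M < N"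
    and C4: "C4_on {0<..} phit"
    and rstar: "rstar > 0"
    and conv: "\<And>r. 0 < r \<Longrightarrow> r \<le> rstar \<Longrightarrow> deriv (deriv phit) r \<ge> 0"
    and conc: "\<And>r. r > rstar \<Longrightarrow> deriv (deriv phit) r < 0"
    and decay: "\<And>k. k \<le> 4 \<Longrightarrow> ((deriv ^^ k) phit \<longlongrightarrow> 0) at_top"
    and incr: "strict_mono y"
    and per: "\<And>i. y (i + 1 + 2 * N) - y (i + 2 * N) = y (i + 1) - y i"
    and l_lo: "l (-M) = -N" and l_hi: "l M = N"
    and l_mono: "strict_mono_on {-M..M} l"
    and l_per: "\<And>j. l (j + 2 * M) = l j + 2 * N"
    and nu_ge: "\<And>j. l j - l (j - 1) \<ge> int s"
    and interp: "\<And>j i. 0 \<le> i \<Longrightarrow> i \<le> l j - l (j - 1) \<Longrightarrow>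
                   y (l (j - 1) + i) = Ynode y l (j - 1)
                     + real_of_int i * ((Ynode y l j - Ynode y l (j - 1)) / real_of_int (l j - l (j - 1)))"
    and eps: "\<epsilon> > 0"
  shows "\<exists>\<eta> :: int \<Rightarrow> nat \<Rightarrow> real.
           (\<forall>j\<in>{-M+1..M}. \<forall>k\<in>{2..s}. 0 \<le> \<eta> j k \<and> \<eta> j k \<le> 1) \<and>
           E_at phit s N y =
             E_qc phit s M \<epsilon> y l
             + (\<Sum>j=-M+1..M. Hnode \<epsilon> l (j + 1)
                  * (\<Sum>k=2..s. (- (real k ^ 3) + real k) / 12
                       * deriv (deriv (phi_eps phit \<epsilon>))
                           (real k * (\<eta> j k * Y1 \<epsilon> y l j + (1 - \<eta> j k) * Y1 \<epsilon> y l (j + 1))))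
                  * (\<epsilon> * Hnode \<epsilon> l (j + 1) * (Y2 \<epsilon> y l (j + 1))\<^sup>2))"
proof -
  interpret periodic_interpolated_chain y l s M N
    using incr s nu_ge interp MN(1) l_lo l_hi l_per per by unfold_locales
  have f2: "\<And>x. 0 < x \<Longrightarrow> phit differentiable at x \<and> deriv phit differentiable at x"
    using C4_on_twice_differentiable[OF C4] by simp
  obtain \<eta> where \<eta>: "\<And>j k. 1 \<le> k \<Longrightarrow> \<eta> j k \<in> {0..1}"
    and expansion: "\<And>j k. 1 \<le> k \<Longrightarrow> interface_energy phit j k
           = (- (real k ^ 3) + real k) / 12
             * deriv (deriv phit) (real k * (\<eta> j k * slope j + (1 - \<eta> j k) * slope (j + 1)))
             * (slope j - slope (j + 1))\<^sup>2"
    using interface_energy_expansion[OF f2 C4_on_continuous_deriv2[OF C4]] by blast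
  show ?thesis
  proof (intro exI[of _ \<eta>] conjI ballI)
    show "0 \<le> \<eta> j k" "\<eta> j k \<le> 1" if "k \<in> {2..s}" for j k
      using \<eta> that by auto
  qed (rule E_at_eq_E_qc_plus_correction[OF f2 eps \<eta> expansion])
qed

end
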